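(* Let $\Omega\subset\mathbb{R}^n$ be a bounded domain with smooth boundary, $a=a(x)$ a smooth positive function and $\gamma=\gamma(x)$ a smooth real symmetric positive definite $n\times n$ matrix valued function on $\overline\Omega$. Let $\varphi$ be a smooth real function on $\overline\Omega$ satisfying the eikonal equation $\gamma\nabla\varphi\cdot\nabla\varphi=a$. Given $N\ge1$, let $a_0,\dots,a_N$ be smooth functions on $\overline\Omega$ satisfying $$2\gamma\nabla\varphi\cdot\nabla a_0+(\nabla\cdot\gamma\nabla\varphi)a_0=0,$$ $$2\gamma\nabla\varphi\cdot\nabla a_{j+1}+(\nabla\cdot\gamma\nabla\varphi)a_{j+1}=-\nabla\cdot\gamma\nabla a_j,\quad j=0,\dots,N-1.$$ For $\tau>0$ let $w$ be the unique solution of $$\nabla\cdot\gamma\nabla w-\tau a w=0\ \text{ in }\Omega,\qquad w=e^{\sqrt{\tau}\varphi}\sum_{j=0}^N\frac{a_j}{(\sqrt{\tau})^j}\ \text{ on }\partial\Omega.$$ Then, as $\tau\to\infty$, $$\Big\|e^{-\sqrt{\tau}\varphi}w-\sum_{j=0}^{N-1}\frac{a_j}{(\sqrt{\tau})^j}\Big\|_{H^1(\Omega)}=O\Big(\frac{1}{(\sqrt{\tau})^N}\Big).$$ *)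

theory Defs
  imports "HOL-Analysis.Analysis"
begin

definition pderiv_i :: "'n::finite \<Rightarrow> (real^'n \<Rightarrow> real) \<Rightarrow> real^'n \<Rightarrow> real" where
  "pderiv_i i f x = frechet_derivative f (at x) (axis i 1)"

fun Ck :: "nat \<Rightarrow> (real^'n::finite \<Rightarrow> real) \<Rightarrow> bool" where
  "Ck 0 f = continuous_on UNIV f"
| "Ck (Suc k) f = ((\<forall>x. f differentiable (at x)) \<and> (\<forall>i. Ck k (pderiv_i i f)))"

definition smooth_Rn :: "(real^'n::finite \<Rightarrow> real) \<Rightarrow> bool" where
  "smooth_Rn f = (\<forall>k. Ck k f)"

definition grad :: "(real^'n::finite \<Rightarrow> real) \<Rightarrow> real^'n \<Rightarrow> real^'n" where
  "grad f x = (\<chi> i. pderiv_i i f x)"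

definition divg :: "(real^'n::finite \<Rightarrow> real^'n) \<Rightarrow> real^'n \<Rightarrow> real" where
  "divg F x = (\<Sum>i\<in>UNIV. pderiv_i i (\<lambda>y. F y $ i) x)"

definition smooth_bounded_domain :: "(real^'n::finite) set \<Rightarrow> bool" where
  "smooth_bounded_domain \<Omega> =
     (open \<Omega> \<and> connected \<Omega> \<and> bounded \<Omega> \<and> \<Omega> \<noteq> {} \<and>
      (\<exists>\<rho>. smooth_Rn \<rho> \<and> \<Omega> = {x. \<rho> x < 0} \<and> frontier \<Omega> = {x. \<rho> x = 0} \<and>
           (\<forall>x\<in>frontier \<Omega>. grad \<rho> x \<noteq> 0)))"

definition smooth_matrix :: "(real^'n::finite \<Rightarrow> real^'n^'n) \<Rightarrow> bool" where
  "smooth_matrix G = (\<forall>i j. smooth_Rn (\<lambda>x. G x $ i $ j))"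

definition sym_pos_def :: "real^'n::finite^'n \<Rightarrow> bool" where
  "sym_pos_def A = (transpose A = A \<and> (\<forall>v. v \<noteq> 0 \<longrightarrow> (A *v v) \<bullet> v > 0))"

text \<open>H^1(\<Omega>) norm (for functions that are smooth on the closure).\<close>
definition H1_norm :: "(real^'n::finite) set \<Rightarrow> (real^'n \<Rightarrow> real) \<Rightarrow> real" where
  "H1_norm \<Omega> u = sqrt (integral \<Omega> (\<lambda>x. (u x)\<^sup>2 + (norm (grad u x))\<^sup>2))"

end

theory Submission
  imports Defs
begin

text \<open>
  Write \<open>s = \<surd>\<tau>\<close> and \<open>v = e\<^sup>-\<^sup>s\<^sup>\<phi> w - (\<Sum>j\<le>N. a\<^sub>j / s\<^sup>j)\<close>; by the boundary condition \<open>v\<close>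
  vanishes on \<open>\<partial>\<Omega>\<close>, and the quantity to be estimated is \<open>v + a\<^sub>N / s\<^sup>N\<close>. Testing the equation
  for \<open>w\<close> against \<open>e\<^sup>-\<^sup>s\<^sup>\<phi> v\<close> and integrating by parts, the eikonal equation cancels the
  terms of order \<open>s\<^sup>2\<close> and the transport equations make the remaining ones telescope, which
  leaves the energy identity \<open>\<integral> \<gamma>\<nabla>v\<cdot>\<nabla>v = s\<^sup>-\<^sup>N \<integral> v \<nabla>\<cdot>\<gamma>\<nabla>a\<^sub>N\<close>. Uniform ellipticity of \<open>\<gamma>\<close>, the
  Poincare inequality and Young's inequality turn it into \<open>\<parallel>\<nabla>v\<parallel>\<^sub>L\<^sub>2 = O(s\<^sup>-\<^sup>N)\<close>, hence
  \<open>\<parallel>v\<parallel>\<^sub>H\<^sub>1 = O(s\<^sup>-\<^sup>N)\<close>.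

  Integration by parts is derived from first principles: the boundary of a smooth domain is
  a null set, and the zero extension of a \<open>C\<^sup>1\<close> function vanishing on \<open>\<partial>\<Omega>\<close> is Lipschitz along
  coordinate lines, so its difference quotients, each of integral zero, converge dominatedly
  to the partial derivative away from \<open>\<partial>\<Omega>\<close>.
\<close>

lemma pderiv_i_eqI: "(f has_derivative f') (at x) \<Longrightarrow> pderiv_i i f x = f' (axis i 1)"
  unfolding pderiv_i_def by (metis frechet_derivative_at)

lemmas has_derivative_frechet_derivative = frechet_derivative_works[THEN iffD1]

lemma pderiv_i_add:
  "f differentiable (at x) \<Longrightarrow> g differentiable (at x) \<Longrightarrow>
   pderiv_i i (\<lambda>y. f y + g y) x = pderiv_i i f x + pderiv_i i g x"
  by (subst pderiv_i_eqI[OF has_derivative_add[OF has_derivative_frechet_derivative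
        has_derivative_frechet_derivative]]) (simp_all add: pderiv_i_def)

lemma pderiv_i_diff:
  "f differentiable (at x) \<Longrightarrow> g differentiable (at x) \<Longrightarrow>
   pderiv_i i (\<lambda>y. f y - g y) x = pderiv_i i f x - pderiv_i i g x"
  by (subst pderiv_i_eqI[OF has_derivative_diff[OF has_derivative_frechet_derivative
        has_derivative_frechet_derivative]]) (simp_all add: pderiv_i_def)

lemma pderiv_i_mult:
  "f differentiable (at x) \<Longrightarrow> g differentiable (at x) \<Longrightarrow>
   pderiv_i i (\<lambda>y. f y * g y :: real) x = f x * pderiv_i i g x + pderiv_i i f x * g x"
  by (subst pderiv_i_eqI[OF has_derivative_mult[OF has_derivative_frechet_derivative
        has_derivative_frechet_derivative]]) (simp_all add: pderiv_i_def)

lemma pderiv_i_const: "pderiv_i i (\<lambda>y. c :: real) x = 0"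
  by (subst pderiv_i_eqI[OF has_derivative_const]) simp

lemma pderiv_i_cmult:
  "f differentiable (at x) \<Longrightarrow> pderiv_i i (\<lambda>y. c * f y :: real) x = c * pderiv_i i f x"
  by (subst pderiv_i_eqI[OF has_derivative_mult_right[OF has_derivative_frechet_derivative]])
    (simp_all add: pderiv_i_def)

lemma pderiv_i_exp:
  assumes "f differentiable (at x)"
  shows "pderiv_i i (\<lambda>y. exp (f y)) x = exp (f x) * pderiv_i i f x"
proof -
  have "(exp has_derivative (\<lambda>h. exp (f x) * h)) (at (f x))"
    using DERIV_exp[of "f x"] by (simp add: has_field_derivative_def)
  from has_derivative_compose[OF has_derivative_frechet_derivative[OF assms] this]
  show ?thesis by (subst pderiv_i_eqI) (simp_all add: o_def pderiv_i_def mult.commute)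
qed

lemma pderiv_i_sum:
  "finite S \<Longrightarrow> (\<And>j. j \<in> S \<Longrightarrow> f j differentiable (at x)) \<Longrightarrow>
   pderiv_i i (\<lambda>y. \<Sum>j\<in>S. f j y :: real) x = (\<Sum>j\<in>S. pderiv_i i (f j) x)"
  by (subst pderiv_i_eqI[OF has_derivative_sum[OF has_derivative_frechet_derivative]])
    (simp_all add: pderiv_i_def)

lemma pderiv_i_component:
  "pderiv_i i (\<lambda>y::real^'n::finite. y $ k) x = (if i = k then 1 else 0)"
  by (subst pderiv_i_eqI[OF bounded_linear.has_derivative[OF bounded_linear_vec_nth
        has_derivative_ident]]) (simp add: axis_def)

lemma grad_component: "grad f x $ i = pderiv_i i f x"
  by (simp add: grad_def)

lemma norm_grad_power2: "(norm (grad f x))\<^sup>2 = (\<Sum>i\<in>UNIV. (pderiv_i i f x)\<^sup>2)"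
  unfolding power2_norm_eq_inner by (simp add: inner_vec_def grad_def power2_eq_square)

lemma grad_add:
  "f differentiable (at x) \<Longrightarrow> g differentiable (at x) \<Longrightarrow>
   grad (\<lambda>y. f y + g y) x = grad f x + grad g x"
  by (simp add: vec_eq_iff grad_component pderiv_i_add)

lemma grad_diff:
  "f differentiable (at x) \<Longrightarrow> g differentiable (at x) \<Longrightarrow>
   grad (\<lambda>y. f y - g y) x = grad f x - grad g x"
  by (simp add: vec_eq_iff grad_component pderiv_i_diff)

lemma grad_mult:
  "f differentiable (at x) \<Longrightarrow> g differentiable (at x) \<Longrightarrow>
   grad (\<lambda>y. f y * g y) x = f x *\<^sub>R grad g x + g x *\<^sub>R grad f x"
  by (simp add: vec_eq_iff grad_component pderiv_i_mult)

lemma grad_cmult: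
  "f differentiable (at x) \<Longrightarrow> grad (\<lambda>y. c * f y) x = c *\<^sub>R grad f x"
  by (simp add: vec_eq_iff grad_component pderiv_i_cmult)

lemma grad_divide_const:
  "f differentiable (at x) \<Longrightarrow> grad (\<lambda>y. f y / c) x = grad f x /\<^sub>R c"
  using grad_cmult[of f x "inverse c"] by (simp add: divide_inverse_commute)

lemma grad_exp:
  "f differentiable (at x) \<Longrightarrow> grad (\<lambda>y. exp (f y)) x = exp (f x) *\<^sub>R grad f x"
  by (simp add: vec_eq_iff grad_component pderiv_i_exp)

lemma grad_sum:
  "finite S \<Longrightarrow> (\<And>j. j \<in> S \<Longrightarrow> f j differentiable (at x)) \<Longrightarrow>
   grad (\<lambda>y. \<Sum>j\<in>S. f j y) x = (\<Sum>j\<in>S. grad (f j) x)"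
  by (simp add: vec_eq_iff grad_component pderiv_i_sum sum_component)

lemma grad_weighted_sum:
  assumes "finite J" and "\<And>j. j \<in> J \<Longrightarrow> f j differentiable (at y)"
  shows "grad (\<lambda>z. \<Sum>j\<in>J. f j z / c j) y = (\<Sum>j\<in>J. grad (f j) y /\<^sub>R c j)"
proof -
  have d: "(\<lambda>z. f j z / c j) differentiable (at y)" if "j \<in> J" for j
    using assms(2)[OF that] unfolding divide_inverse by simp
  show ?thesis
    using assms(2) by (simp add: grad_sum[OF assms(1) d] grad_divide_const)
qed

lemma divg_sum:
  assumes "finite S" "\<And>j i. j \<in> S \<Longrightarrow> (\<lambda>y. F j y $ i) differentiable (at x)"
  shows "divg (\<lambda>y. \<Sum>j\<in>S. F j y) x = (\<Sum>j\<in>S. divg (F j) x)"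
  unfolding divg_def sum_component using assms by (simp add: pderiv_i_sum sum.swap[of _ S])

lemma divg_cmult:
  "(\<And>i. (\<lambda>y. F y $ i) differentiable (at x)) \<Longrightarrow>
   divg (\<lambda>y. c *\<^sub>R F y) x = c * divg F x"
  by (simp add: divg_def pderiv_i_cmult sum_distrib_left)

lemma divg_scaleR:
  assumes "f differentiable (at x)" "\<And>i. (\<lambda>y. F y $ i) differentiable (at x)"
  shows "divg (\<lambda>y. f y *\<^sub>R F y) x = grad f x \<bullet> F x + f x * divg F x"
  using assms
  by (simp add: divg_def pderiv_i_mult inner_vec_def grad_component sum.distrib sum_distrib_left
      mult.commute)

lemma C1_iff:
  "Ck 1 f \<longleftrightarrow> (\<forall>x. f differentiable (at x)) \<and> (\<forall>i. continuous_on UNIV (pderiv_i i f))"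
  by (simp add: One_nat_def)

lemma C1_differentiable: "Ck 1 f \<Longrightarrow> f differentiable (at x)"
  by (simp add: C1_iff)

lemma C1_continuous_on: "Ck 1 f \<Longrightarrow> continuous_on S f"
  by (metis C1_iff continuous_on_subset differentiable_at_imp_differentiable_on
      differentiable_imp_continuous_on subset_UNIV)

lemma C1_continuous_on_pderiv_i: "Ck 1 f \<Longrightarrow> continuous_on S (pderiv_i i f)"
  by (meson C1_iff continuous_on_subset subset_UNIV)

lemma C1_add: "Ck 1 f \<Longrightarrow> Ck 1 g \<Longrightarrow> Ck 1 (\<lambda>y. f y + g y)"
  by (simp add: C1_iff pderiv_i_add differentiable_add continuous_on_add)

lemma C1_diff: "Ck 1 f \<Longrightarrow> Ck 1 g \<Longrightarrow> Ck 1 (\<lambda>y. f y - g y)"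
  by (simp add: C1_iff pderiv_i_diff differentiable_diff continuous_on_diff)

lemma C1_mult: "Ck 1 f \<Longrightarrow> Ck 1 g \<Longrightarrow> Ck 1 (\<lambda>y. f y * g y :: real)"
  using C1_continuous_on[of f] C1_continuous_on[of g]
  by (simp add: C1_iff pderiv_i_mult differentiable_mult continuous_on_mult continuous_on_add)

lemma C1_const: "Ck 1 (\<lambda>y. c :: real)"
  by (simp add: C1_iff pderiv_i_const)

lemma C1_cmult: "Ck 1 f \<Longrightarrow> Ck 1 (\<lambda>y. c * f y :: real)"
  by (rule C1_mult[OF C1_const])

lemma C1_divide_const: "Ck 1 f \<Longrightarrow> Ck 1 (\<lambda>y. f y / c :: real)"
  using C1_cmult[of f "inverse c"] by (simp add: divide_inverse_commute)

lemma C1_exp: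
  assumes "Ck 1 f"
  shows "Ck 1 (\<lambda>y. exp (f y))"
proof -
  have "exp differentiable (at (f x))" for x
    by (rule differentiableI[OF DERIV_exp[unfolded has_field_derivative_def]])
  then have "(\<lambda>y. exp (f y)) differentiable (at x)" for x
    using differentiable_compose[of exp f x] C1_differentiable[OF assms] by (simp add: o_def)
  moreover have "continuous_on UNIV (\<lambda>y. exp (f y) * pderiv_i i f y)" for i
    by (rule continuous_on_mult[OF continuous_on_exp[OF C1_continuous_on[OF assms]]
          C1_continuous_on_pderiv_i[OF assms]])
  ultimately show ?thesis
    using C1_differentiable[OF assms] by (simp add: C1_iff pderiv_i_exp)
qed

lemma C1_sum:
  "finite S \<Longrightarrow> (\<And>j. j \<in> S \<Longrightarrow> Ck 1 (f j)) \<Longrightarrow> Ck 1 (\<lambda>y. \<Sum>j\<in>S. f j y :: real)"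
proof (induction S rule: finite_induct)
  case empty
  show ?case unfolding sum.empty by (rule C1_const)
next
  case (insert j S)
  have "Ck 1 (f j)" "Ck 1 (\<lambda>y. \<Sum>j\<in>S. f j y)"
    using insert.prems by (blast, intro insert.IH, blast)
  then show ?case unfolding sum.insert[OF insert(1,2)] by (rule C1_add)
qed

lemma C1_component: "Ck 1 (\<lambda>y::real^'n::finite. y $ k)"
  unfolding C1_iff pderiv_i_component
  using differentiableI[OF bounded_linear_imp_has_derivative[OF bounded_linear_vec_nth[of k]]]
  by auto

lemma smooth_imp_C1: "smooth_Rn f \<Longrightarrow> Ck 1 f"
  by (simp add: smooth_Rn_def)

lemma smooth_imp_differentiable: "smooth_Rn f \<Longrightarrow> f differentiable (at x)"
  by (rule C1_differentiable[OF smooth_imp_C1])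

lemma smooth_imp_C1_pderiv_i: "smooth_Rn f \<Longrightarrow> Ck 1 (pderiv_i i f)"
  unfolding smooth_Rn_def by (metis Ck.simps(2) One_nat_def)

lemma C1_matrix_grad_component:
  assumes "smooth_matrix \<gamma>" "smooth_Rn f"
  shows "Ck 1 (\<lambda>y. (\<gamma> y *v grad f y) $ i)"
proof -
  have entry: "Ck 1 (\<lambda>y. \<gamma> y $ i $ j * pderiv_i j f y)" for j
    using assms unfolding smooth_matrix_def
    by (intro C1_mult[OF smooth_imp_C1 smooth_imp_C1_pderiv_i]) auto
  show ?thesis
    unfolding matrix_vector_mult_def vec_lambda_beta grad_component
    by (rule C1_sum) (simp_all only: finite entry)
qed

lemma continuous_on_norm_grad_power2: "Ck 1 f \<Longrightarrow> continuous_on S (\<lambda>x. (norm (grad f x))\<^sup>2)"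
  unfolding norm_grad_power2 by (intro continuous_intros C1_continuous_on_pderiv_i)

lemma continuous_on_matrix_energy:
  assumes "smooth_matrix \<gamma>" "Ck 1 v"
  shows "continuous_on S (\<lambda>x. (\<gamma> x *v grad v x) \<bullet> grad v x)"
  using assms unfolding inner_vec_def matrix_vector_mult_def grad_component smooth_matrix_def
  by (intro continuous_intros C1_continuous_on_pderiv_i C1_continuous_on[OF smooth_imp_C1]) auto

lemma continuous_on_divg_matrix_grad:
  assumes "smooth_matrix \<gamma>" "smooth_Rn f"
  shows "continuous_on S (divg (\<lambda>y. \<gamma> y *v grad f y))"
  unfolding divg_def[abs_def]
  by (intro continuous_on_sum C1_continuous_on_pderiv_i C1_matrix_grad_component[OF assms])

lemma continuous_on_integrable_on_bounded:
  fixes f :: "'a::euclidean_space \<Rightarrow> real"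
  assumes "continuous_on UNIV f" "bounded S" "S \<in> sets lebesgue"
  shows "f integrable_on S"
proof -
  obtain a where "S \<subseteq> cbox (-a) a" using bounded_subset_cbox_symmetric[OF assms(2)] by blast
  moreover have "f absolutely_integrable_on cbox (-a) a"
    by (rule absolutely_integrable_continuous[OF continuous_on_subset[OF assms(1)]]) simp
  ultimately have "f absolutely_integrable_on S" using set_integrable_subset assms(3) by blast
  then show ?thesis using set_lebesgue_integral_eq_integral(1) by blast
qed

lemma has_real_derivative_along_axis:
  fixes g :: "real^'n::finite \<Rightarrow> real"
  assumes "g differentiable (at (p + t *\<^sub>R axis i 1))"
  shows "((\<lambda>u. g (p + u *\<^sub>R axis i 1)) has_real_derivative pderiv_i i g (p + t *\<^sub>R axis i 1))
           (at t)"
proof -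
  let ?e = "axis i 1 :: real^'n" and ?g' = "frechet_derivative g (at (p + t *\<^sub>R axis i 1))"
  have "((\<lambda>u. p + u *\<^sub>R ?e) has_derivative (\<lambda>h. h *\<^sub>R ?e)) (at t)"
    by (auto intro!: derivative_eq_intros)
  from has_derivative_compose[OF this has_derivative_frechet_derivative[OF assms]]
  have "((\<lambda>u. g (p + u *\<^sub>R ?e)) has_derivative (\<lambda>h. ?g' (h *\<^sub>R ?e))) (at t)"
    by (simp add: o_def)
  moreover have "?g' (h *\<^sub>R ?e) = pderiv_i i g (p + t *\<^sub>R ?e) * h" for h
    using linear_scale[OF has_derivative_linear[OF has_derivative_frechet_derivative[OF assms]]]
    by (simp add: pderiv_i_def)
  ultimately show ?thesis by (simp add: has_field_derivative_def)
qed

lemma mvt_along_axis: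
  fixes g :: "real^'n::finite \<Rightarrow> real"
  assumes "Ck 1 g"
  obtains z where "\<bar>z\<bar> \<le> \<bar>t\<bar>"
    "g (p + t *\<^sub>R axis i 1) - g p = t * pderiv_i i g (p + z *\<^sub>R axis i 1)"
proof (cases "t = 0")
  case True
  then show ?thesis using that[of 0] by simp
next
  case False
  define lo hi where "lo = min 0 t" and "hi = max 0 t"
  have "lo < hi" using False by (auto simp: lo_def hi_def)
  then obtain z where z: "lo < z" "z < hi"
    "g (p + hi *\<^sub>R axis i 1) - g (p + lo *\<^sub>R axis i 1) = (hi - lo) * pderiv_i i g (p + z *\<^sub>R axis i 1)"
    using MVT2[OF _ has_real_derivative_along_axis[OF C1_differentiable[OF assms]]] by blast
  show ?thesis
  proof (rule that)
    show "\<bar>z\<bar> \<le> \<bar>t\<bar>" using z by (auto simp: lo_def hi_def)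
    show "g (p + t *\<^sub>R axis i 1) - g p = t * pderiv_i i g (p + z *\<^sub>R axis i 1)"
      using z(3) by (cases "t < 0") (auto simp: lo_def hi_def algebra_simps)
  qed
qed

lemma C1_eq_along_axis_imp_zero:
  fixes \<rho> :: "real^'n::finite \<Rightarrow> real"
  assumes "Ck 1 \<rho>" and "\<And>u. \<bar>u\<bar> \<le> \<bar>d\<bar> \<Longrightarrow> pderiv_i i \<rho> (a + u *\<^sub>R axis i 1) \<noteq> 0"
    and "\<rho> (a + d *\<^sub>R axis i 1) = \<rho> a"
  shows "d = 0"
  using mvt_along_axis[OF assms(1), of d a i] assms(2,3) by force

lemma C1_lipschitz_along_axis:
  fixes g :: "real^'n::finite \<Rightarrow> real"
  assumes "Ck 1 g" and "bounded S"
  obtains L where "L \<ge> 0"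
    "\<And>p t. p \<in> S \<Longrightarrow> \<bar>t\<bar> \<le> 1 \<Longrightarrow> \<bar>g (p + t *\<^sub>R axis i 1) - g p\<bar> \<le> L * \<bar>t\<bar>"
proof -
  obtain R where R: "R > 0" "S \<subseteq> ball 0 R" using bounded_subset_ballD[OF assms(2)] by blast
  have "compact (pderiv_i i g ` cball 0 (R + 1))"
    by (rule compact_continuous_image[OF C1_continuous_on_pderiv_i[OF assms(1)]]) simp
  then obtain L where L: "\<And>y. y \<in> cball 0 (R + 1) \<Longrightarrow> \<bar>pderiv_i i g y\<bar> \<le> L"
    using compact_imp_bounded bounded_real by (metis imageI)
  show ?thesis
  proof (rule that)
    show "L \<ge> 0" using L[of 0] R(1) by simp
    fix p and t :: real assume p: "p \<in> S" and t: "\<bar>t\<bar> \<le> 1"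
    obtain z where z: "\<bar>z\<bar> \<le> \<bar>t\<bar>"
      "g (p + t *\<^sub>R axis i 1) - g p = t * pderiv_i i g (p + z *\<^sub>R axis i 1)"
      using mvt_along_axis[OF assms(1)] by blast
    have "norm (p + z *\<^sub>R axis i 1) \<le> norm p + \<bar>z\<bar>"
      using norm_triangle_ineq[of p "z *\<^sub>R axis i 1"] by simp
    also have "\<dots> \<le> R + 1" using p R z(1) t by auto
    finally have "\<bar>pderiv_i i g (p + z *\<^sub>R axis i 1)\<bar> \<le> L" by (intro L) simp
    then show "\<bar>g (p + t *\<^sub>R axis i 1) - g p\<bar> \<le> L * \<bar>t\<bar>"
      unfolding z(2) abs_mult by (metis abs_ge_zero mult.commute mult_left_mono)
  qed
qed

section \<open>The boundary of a smooth domain is a null set\<close>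

lemma negligible_if_disjoint_translates:
  fixes A B :: "'a::euclidean_space set"
  assumes A: "A \<in> lmeasurable" and B: "B \<in> lmeasurable" and D: "infinite D"
    and sub: "\<And>d. d \<in> D \<Longrightarrow> (+) d ` A \<subseteq> B"
    and disj: "pairwise (\<lambda>d d'. disjnt ((+) d ` A) ((+) d' ` A)) D"
  shows "negligible A"
proof (rule ccontr)
  assume "\<not> negligible A"
  then have "measure lebesgue A \<noteq> 0" using negligible_iff_measure0[OF A] by simp
  then have pos: "measure lebesgue A > 0" using measure_nonneg[of lebesgue A] by linarith
  obtain k :: nat where k: "real k > measure lebesgue B / measure lebesgue A"
    using reals_Archimedean2 by blast
  obtain F where F: "finite F" "card F = k" "F \<subseteq> D"
    using infinite_arbitrarily_large[OF D] by blast
  have "real k * measure lebesgue A = measure lebesgue (\<Union>d\<in>F. (+) d ` A)"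
    using F pairwise_subset[OF disj F(3)] measurable_translation[OF A]
    by (simp add: measure_UNION' measure_translation)
  also have "\<dots> \<le> measure lebesgue B"
    using F sub measurable_translation[OF A] by (intro measure_mono_fmeasurable B) auto
  finally show False using k pos by (simp add: field_simps)
qed

lemma negligible_zero_set_near_regular_point:
  fixes \<rho> :: "real^'n::finite \<Rightarrow> real"
  assumes C: "Ck 1 \<rho>" and r: "r > 0"
    and nz: "\<And>y. y \<in> ball p (2 * r) \<Longrightarrow> pderiv_i i \<rho> y \<noteq> 0"
  shows "negligible ({x. \<rho> x = 0} \<inter> cball p r)"
proof (rule negligible_if_disjoint_translates)
  \<comment> \<open>\<open>\<rho>\<close> is strictly monotone along \<open>e\<^sub>i\<close> near \<open>p\<close>, so the translates of its zero set
    by \<open>t e\<^sub>i\<close>, \<open>0 \<le> t < r\<close>, are pairwise disjoint\<close>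
  let ?A = "{x. \<rho> x = 0} \<inter> cball p r" and ?e = "axis i 1 :: real^'n"
  show "?A \<in> lmeasurable"
    using C1_continuous_on[OF C]
    by (intro lmeasurable_compact closed_Int_compact closed_Collect_eq) auto
  show "ball p (2 * r) \<in> lmeasurable" by simp
  show "infinite ((\<lambda>t. t *\<^sub>R ?e) ` {0..<r})"
    using r by (subst finite_image_iff) (auto simp: inj_on_def)
  show "(+) d ` ?A \<subseteq> ball p (2 * r)" if "d \<in> (\<lambda>t. t *\<^sub>R ?e) ` {0..<r}" for d
  proof -
    have "norm d < r" using that by auto
    then have "dist p (d + x) < 2 * r" if "x \<in> ?A" for x
      using that dist_triangle[of p "d + x" x] by (simp add: dist_norm)
    then show ?thesis by auto
  qed
  show "pairwise (\<lambda>d d'. disjnt ((+) d ` ?A) ((+) d' ` ?A)) ((\<lambda>t. t *\<^sub>R ?e) ` {0..<r})"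
  proof (intro pairwiseI)
    fix d d' assume "d \<in> (\<lambda>t. t *\<^sub>R ?e) ` {0..<r}" "d' \<in> (\<lambda>t. t *\<^sub>R ?e) ` {0..<r}"
      and ne: "d \<noteq> d'"
    then obtain t t' where t: "0 \<le> t" "t < r" "0 \<le> t'" "t' < r"
      and d: "d = t *\<^sub>R ?e" "d' = t' *\<^sub>R ?e" by auto
    show "disjnt ((+) d ` ?A) ((+) d' ` ?A)"
    proof (rule ccontr)
      assume "\<not> disjnt ((+) d ` ?A) ((+) d' ` ?A)"
      then obtain a a' where a: "\<rho> a = 0" "dist p a \<le> r" and a': "\<rho> a' = 0"
        and eq: "t *\<^sub>R ?e + a = t' *\<^sub>R ?e + a'"
        unfolding d disjnt_def by auto
      have a'_eq: "a' = a + (t - t') *\<^sub>R ?e" using eq by (simp add: algebra_simps)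
      have "t - t' = 0"
      proof (rule C1_eq_along_axis_imp_zero[OF C])
        fix u assume "\<bar>u\<bar> \<le> \<bar>t - t'\<bar>"
        then have "dist p (a + u *\<^sub>R ?e) < 2 * r"
          using a(2) t dist_triangle[of p "a + u *\<^sub>R ?e" a] by (simp add: dist_norm)
        then show "pderiv_i i \<rho> (a + u *\<^sub>R ?e) \<noteq> 0" by (intro nz) simp
      next
        show "\<rho> (a + (t - t') *\<^sub>R ?e) = \<rho> a" using a a' a'_eq by simp
      qed
      then show False using ne d by simp
    qed
  qed
qed

lemma negligible_regular_zero_set:
  fixes \<rho> :: "real^'n::finite \<Rightarrow> real"
  assumes C: "Ck 1 \<rho>"
  shows "negligible {x. \<rho> x = 0 \<and> grad \<rho> x \<noteq> 0}"
  unfolding locally_negligible_alt[of "{x. \<rho> x = 0 \<and> grad \<rho> x \<noteq> 0}"]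
proof
  fix p assume p: "p \<in> {x. \<rho> x = 0 \<and> grad \<rho> x \<noteq> 0}"
  then obtain i where i: "pderiv_i i \<rho> p \<noteq> 0" by (auto simp: grad_def vec_eq_iff)
  have "open {y. pderiv_i i \<rho> y \<noteq> 0}"
    using C1_continuous_on_pderiv_i[OF C] by (intro open_Collect_neq) auto
  then obtain R where R: "R > 0" "ball p R \<subseteq> {y. pderiv_i i \<rho> y \<noteq> 0}"
    using i open_contains_ball by blast
  let ?U = "{x. \<rho> x = 0 \<and> grad \<rho> x \<noteq> 0} \<inter> ball p (R / 2)"
  have "negligible ({x. \<rho> x = 0} \<inter> cball p (R / 2))"
    using R by (intro negligible_zero_set_near_regular_point[OF C, of "R / 2" p i]) auto
  then have "negligible ?U" by (rule negligible_subset) auto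
  moreover have "openin (top_of_set {x. \<rho> x = 0 \<and> grad \<rho> x \<noteq> 0}) ?U"
    by (intro openin_open_Int) simp
  ultimately show "\<exists>U. openin (top_of_set {x. \<rho> x = 0 \<and> grad \<rho> x \<noteq> 0}) U \<and> p \<in> U \<and> negligible U"
    using p R by (intro exI[of _ ?U]) auto
qed

lemma negligible_frontier_smooth_domain:
  "smooth_bounded_domain \<Omega> \<Longrightarrow> negligible (frontier \<Omega>)"
  unfolding smooth_bounded_domain_def
  by (auto intro: negligible_subset[OF negligible_regular_zero_set[OF smooth_imp_C1]])

section \<open>Integration by parts against functions vanishing on the boundary\<close>

lemma has_integral_translate_UNIV:
  fixes f :: "'a::euclidean_space \<Rightarrow> real"
  assumes I: "(f has_integral I) UNIV" and "bounded S" and vanish: "\<And>x. x \<notin> S \<Longrightarrow> f x = 0"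
  shows "((\<lambda>x. f (x + c)) has_integral I) UNIV"
proof -
  obtain a where a: "S \<subseteq> cbox (-a) a" using bounded_subset_cbox_symmetric[OF assms(2)] by blast
  have "f = (\<lambda>x. if x \<in> cbox (-a) a then f x else 0)" using a vanish by fastforce
  then have "(f has_integral I) (cbox (-a) a)"
    using I has_integral_restrict_UNIV[of "cbox (-a) a" f I] by metis
  from has_integral_shift_cbox[OF this, of c]
  show ?thesis
  proof (rule has_integral_on_superset)
    fix x assume "x \<notin> cbox (- a - c) (a - c)"
    then have "x + c \<notin> cbox (-a) a"
      by (auto simp: mem_box algebra_simps inner_diff_left inner_add_left)
    then show "f (x + c) = 0" using a vanish by blast
  qed simp
qed

lemma has_integral_Compl_negligible_iff:
  fixes f :: "'a::euclidean_space \<Rightarrow> 'b::banach"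
  assumes "negligible N"
  shows "(f has_integral y) (- N) \<longleftrightarrow> (f has_integral y) UNIV"
  by (rule has_integral_spike_set_eq) (auto intro: negligible_subset[OF assms])

lemma has_integral_dominated_convergence_AE:
  fixes Q :: "nat \<Rightarrow> 'a::euclidean_space \<Rightarrow> real"
  assumes N: "negligible N" and Q: "\<And>k. (Q k has_integral 0) UNIV" and B: "B integrable_on UNIV"
    and bound: "\<And>k x. norm (Q k x) \<le> B x" and lim: "\<And>x. x \<notin> N \<Longrightarrow> (\<lambda>k. Q k x) \<longlonglongrightarrow> G x"
  shows "(G has_integral 0) UNIV"
proof -
  have Q': "(Q k has_integral 0) (- N)" for k
    using Q unfolding has_integral_Compl_negligible_iff[OF N] .
  have B': "B integrable_on - N"
    using B unfolding integrable_on_def has_integral_Compl_negligible_iff[OF N] .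
  have "(G has_integral 0) (- N)"
    using bound lim by (intro has_integral_dominated_convergence[of Q "\<lambda>k. 0", OF Q' B']) auto
  then show ?thesis unfolding has_integral_Compl_negligible_iff[OF N] .
qed

lemma zero_extension_lipschitz_along_axis:
  fixes g :: "real^'n::finite \<Rightarrow> real" and \<Omega> :: "(real^'n) set"
  defines "h \<equiv> \<lambda>x. if x \<in> \<Omega> then g x else 0"
  assumes zero: "\<forall>x\<in>frontier \<Omega>. g x = 0" and "L \<ge> 0"
    and lip: "\<And>p t. p \<in> closure \<Omega> \<Longrightarrow> \<bar>t\<bar> \<le> 1 \<Longrightarrow>
                \<bar>g (p + t *\<^sub>R axis i 1) - g p\<bar> \<le> L * \<bar>t\<bar>"
    and t: "\<bar>t\<bar> \<le> 1"
  shows "\<bar>h (x + t *\<^sub>R axis i 1) - h x\<bar> \<le> L * \<bar>t\<bar>"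
proof -
  let ?e = "axis i 1 :: real^'n"
  have from_inside: "\<bar>h (x + t *\<^sub>R ?e) - h x\<bar> \<le> L * \<bar>t\<bar>"
    if x: "x \<in> \<Omega>" and t: "\<bar>t\<bar> \<le> 1" for x t
  proof (cases "x + t *\<^sub>R ?e \<in> \<Omega>")
    case True
    then show ?thesis using x t lip[of x t] closure_subset by (auto simp: h_def)
  next
    case False
    have "closed_segment x (x + t *\<^sub>R ?e) \<inter> frontier \<Omega> \<noteq> {}"
      using x False by (intro connected_Int_frontier) auto
    then obtain s where s: "0 \<le> s" "s \<le> 1" "x + (s * t) *\<^sub>R ?e \<in> frontier \<Omega>"
      by (auto simp: closed_segment_def algebra_simps)
    have st: "\<bar>s * t\<bar> \<le> \<bar>t\<bar>" using s by (simp add: abs_mult mult_left_le_one_le)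
    have "\<bar>h (x + t *\<^sub>R ?e) - h x\<bar> = \<bar>g (x + (s * t) *\<^sub>R ?e) - g x\<bar>"
      using x False zero s(3) by (simp add: h_def)
    also have "\<dots> \<le> L * \<bar>s * t\<bar>" using x t st closure_subset by (intro lip) auto
    also have "\<dots> \<le> L * \<bar>t\<bar>" using st \<open>L \<ge> 0\<close> by (rule mult_left_mono)
    finally show ?thesis .
  qed
  show ?thesis
  proof (cases "x \<in> \<Omega>")
    case True
    then show ?thesis using from_inside t by blast
  next
    case False
    show ?thesis
    proof (cases "x + t *\<^sub>R ?e \<in> \<Omega>")
      case True
      from from_inside[OF True, of "- t"] t False show ?thesis by (simp add: h_def)
    next
      case False
      then show ?thesis using \<open>x \<notin> \<Omega>\<close> \<open>L \<ge> 0\<close> by (simp add: h_def)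
    qed
  qed
qed

lemma zero_extension_difference_quotient_tendsto:
  fixes g :: "real^'n::finite \<Rightarrow> real" and \<Omega> :: "(real^'n) set" and t :: "nat \<Rightarrow> real"
  defines "h \<equiv> \<lambda>x. if x \<in> \<Omega> then g x else 0"
  assumes "open \<Omega>" and C: "Ck 1 g" and x: "x \<notin> frontier \<Omega>"
    and t: "filterlim t (at 0) sequentially"
  shows "(\<lambda>k. (h (x + t k *\<^sub>R axis i 1) - h x) / t k)
           \<longlonglongrightarrow> (if x \<in> \<Omega> then pderiv_i i g x else 0)"
proof -
  let ?e = "axis i 1 :: real^'n"
  have t0: "t \<longlonglongrightarrow> 0" using t by (simp add: filterlim_at)
  have near: "eventually (\<lambda>k. x + t k *\<^sub>R ?e \<in> U) sequentially"
    if U: "open U" "x \<in> U" for U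
  proof -
    obtain \<epsilon> where "\<epsilon> > 0" and ball: "ball x \<epsilon> \<subseteq> U"
      using open_contains_ball_eq[OF U(1)] U(2) by blast
    from tendstoD[OF t0 this(1)] show ?thesis
    proof (rule eventually_mono)
      fix k assume "dist (t k) 0 < \<epsilon>"
      then have "x + t k *\<^sub>R ?e \<in> ball x \<epsilon>" by (simp add: dist_norm)
      then show "x + t k *\<^sub>R ?e \<in> U" using ball by blast
    qed
  qed
  show ?thesis
  proof (cases "x \<in> \<Omega>")
    case True
    have "((\<lambda>u. g (x + u *\<^sub>R ?e)) has_real_derivative pderiv_i i g (x + 0 *\<^sub>R ?e)) (at 0)"
      by (rule has_real_derivative_along_axis[OF C1_differentiable[OF C]])
    then have "((\<lambda>u. (g (x + u *\<^sub>R ?e) - g x) / u) \<longlongrightarrow> pderiv_i i g x) (at 0)"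
      by (simp add: has_field_derivative_iff)
    from filterlim_compose[OF this t]
    have "(\<lambda>k. (g (x + t k *\<^sub>R ?e) - g x) / t k) \<longlonglongrightarrow> pderiv_i i g x" .
    moreover have "eventually (\<lambda>k. (g (x + t k *\<^sub>R ?e) - g x) / t k
                                   = (h (x + t k *\<^sub>R ?e) - h x) / t k) sequentially"
      using near[OF \<open>open \<Omega>\<close> True] by eventually_elim (use True in \<open>simp add: h_def\<close>)
    ultimately show ?thesis using True by (simp add: Lim_transform_eventually)
  next
    case False
    with x have "x \<in> - closure \<Omega>" using \<open>open \<Omega>\<close> by (simp add: frontier_def interior_open)
    then have "eventually (\<lambda>k. x + t k *\<^sub>R ?e \<in> - closure \<Omega>) sequentially"
      by (intro near) auto
    then have "eventually (\<lambda>k. 0 = (h (x + t k *\<^sub>R ?e) - h x) / t k) sequentially"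
      by (rule eventually_mono) (use False closure_subset in \<open>auto simp: h_def\<close>)
    from Lim_transform_eventually[OF tendsto_const this] show ?thesis using False by simp
  qed
qed

lemma has_integral_pderiv_i_vanishing_on_frontier:
  fixes g :: "real^'n::finite \<Rightarrow> real"
  assumes bdd: "bounded \<Omega>" and "open \<Omega>" and negF: "negligible (frontier \<Omega>)"
    and C: "Ck 1 g" and zero: "\<forall>x\<in>frontier \<Omega>. g x = 0"
  shows "(pderiv_i i g has_integral 0) \<Omega>"
proof -
  let ?e = "axis i 1 :: real^'n"
  define h where "h x = (if x \<in> \<Omega> then g x else 0)" for x
  define t where "t k = inverse (real (Suc k))" for k
  define Q where "Q k x = (h (x + t k *\<^sub>R ?e) - h x) / t k" for k x
  obtain R where R: "R > 0" "\<Omega> \<subseteq> ball 0 R" using bounded_subset_ballD[OF bdd] by blast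
  obtain L where L: "L \<ge> 0" "\<And>p s. p \<in> closure \<Omega> \<Longrightarrow> \<bar>s\<bar> \<le> 1 \<Longrightarrow>
      \<bar>g (p + s *\<^sub>R ?e) - g p\<bar> \<le> L * \<bar>s\<bar>"
    using C1_lipschitz_along_axis[OF C bounded_closure[OF bdd]] by blast
  have t: "0 < t k" "t k \<le> 1" for k by (auto simp: t_def inverse_le_1_iff)
  have h_vanish: "h x = 0" if "x \<notin> ball 0 R" for x using that R(2) by (auto simp: h_def)
  have "h integrable_on UNIV"
    unfolding h_def integrable_restrict_UNIV
    using C1_continuous_on[OF C] lmeasurable_open[OF bdd \<open>open \<Omega>\<close>]
    by (intro continuous_on_integrable_on_bounded bdd) (auto dest: fmeasurableD)
  then have h_int: "(h has_integral integral UNIV h) UNIV" by (simp add: has_integral_integral)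
  have "((\<lambda>x. h (x + c)) has_integral integral UNIV h) UNIV" for c
    by (rule has_integral_translate_UNIV[OF h_int bounded_ball h_vanish])
  from has_integral_diff[OF this h_int]
  have "((\<lambda>x. h (x + t k *\<^sub>R ?e) - h x) has_integral 0) UNIV" for k by simp
  from has_integral_divide[OF this] have Q_int: "(Q k has_integral 0) UNIV" for k
    unfolding Q_def by simp
  have Q_bound: "norm (Q k x) \<le> indicator (cball 0 (R + 1)) x * L" for k x
  proof (cases "x \<in> cball 0 (R + 1)")
    case True
    have "\<bar>t k\<bar> \<le> 1" using t[of k] by simp
    from zero_extension_lipschitz_along_axis[OF zero L this, of x]
    have "\<bar>h (x + t k *\<^sub>R ?e) - h x\<bar> \<le> L * \<bar>t k\<bar>" by (simp only: h_def)
    then show ?thesis using True t[of k] by (simp add: Q_def divide_le_eq abs_div mult.commute)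
  next
    case False
    then have "x \<notin> ball 0 R" "x + t k *\<^sub>R ?e \<notin> ball 0 R"
      using t[of k] norm_triangle_ineq[of "x + t k *\<^sub>R ?e" "- t k *\<^sub>R ?e"] by auto
    then show ?thesis using False by (simp add: Q_def h_vanish)
  qed
  have "t \<longlonglongrightarrow> 0" unfolding t_def[abs_def] by (rule LIMSEQ_inverse_real_of_nat)
  moreover have "\<forall>k. t k \<noteq> 0" using t(1) by (metis less_irrefl)
  ultimately have "filterlim t (at 0) sequentially" by (simp add: filterlim_at)
  then have Q_lim: "(\<lambda>k. Q k x) \<longlonglongrightarrow> (if x \<in> \<Omega> then pderiv_i i g x else 0)"
    if "x \<notin> frontier \<Omega>" for x
    using that zero_extension_difference_quotient_tendsto[OF \<open>open \<Omega>\<close> C] by (simp add: Q_def h_def)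
  have bound_int: "(\<lambda>x. indicator (cball 0 (R + 1)) x * L) integrable_on UNIV"
    using integrable_on_indicator[of "cball 0 (R + 1)" UNIV] by (intro integrable_on_mult_left) simp
  have "((\<lambda>x. if x \<in> \<Omega> then pderiv_i i g x else 0) has_integral 0) UNIV"
    by (rule has_integral_dominated_convergence_AE[OF negF Q_int bound_int Q_bound Q_lim])
  then show ?thesis unfolding has_integral_restrict_UNIV .
qed

lemma green_identity_vanishing_on_frontier:
  fixes \<psi> :: "real^'n::finite \<Rightarrow> real" and F :: "real^'n \<Rightarrow> real^'n"
  assumes "bounded \<Omega>" "open \<Omega>" "negligible (frontier \<Omega>)"
    and C\<psi>: "Ck 1 \<psi>" and zero: "\<forall>x\<in>frontier \<Omega>. \<psi> x = 0"
    and CF: "\<And>i. Ck 1 (\<lambda>y. F y $ i)"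
  shows "((\<lambda>x. F x \<bullet> grad \<psi> x + \<psi> x * divg F x) has_integral 0) \<Omega>"
proof -
  have each: "(pderiv_i i (\<lambda>y. \<psi> y * F y $ i) has_integral 0) \<Omega>" for i
    by (rule has_integral_pderiv_i_vanishing_on_frontier[OF assms(1-3) C1_mult[OF C\<psi> CF]])
      (simp add: zero)
  have "((\<lambda>x. \<Sum>i\<in>UNIV. pderiv_i i (\<lambda>y. \<psi> y * F y $ i) x) has_integral 0) \<Omega>"
    using has_integral_sum[of UNIV "\<lambda>i. pderiv_i i (\<lambda>y. \<psi> y * F y $ i)" "\<lambda>_. 0" \<Omega>] each
    by simp
  moreover have "(\<Sum>i\<in>UNIV. pderiv_i i (\<lambda>y. \<psi> y * F y $ i) x) = F x \<bullet> grad \<psi> x + \<psi> x * divg F x" for x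
    using C1_differentiable[OF C\<psi>] C1_differentiable[OF CF]
    by (simp add: pderiv_i_mult divg_def inner_vec_def grad_component sum.distrib
        sum_distrib_left mult.commute)
  ultimately show ?thesis by simp
qed

section \<open>Poincare inequality and uniform ellipticity\<close>

lemma poincare_inequality:
  fixes \<Omega> :: "(real^'n::finite) set"
  assumes "open \<Omega>" and R: "\<Omega> \<subseteq> ball 0 R" and negF: "negligible (frontier \<Omega>)"
    and Cv: "Ck 1 v" and zero: "\<forall>x\<in>frontier \<Omega>. v x = 0"
  shows "integral \<Omega> (\<lambda>x. (v x)\<^sup>2) \<le> 4 * R\<^sup>2 * integral \<Omega> (\<lambda>x. (norm (grad v x))\<^sup>2)"
proof -
  have bdd: "bounded \<Omega>" using R bounded_subset by blast
  have meas: "\<Omega> \<in> sets lebesgue" using lmeasurable_open[OF bdd \<open>open \<Omega>\<close>] by (simp add: fmeasurableD)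
  fix k :: 'n
  \<comment> \<open>\<open>\<integral> \<partial>\<^sub>k (v\<^sup>2 x\<^sub>k) = 0\<close> trades \<open>\<integral> v\<^sup>2\<close> for \<open>-2 \<integral> x\<^sub>k v \<partial>\<^sub>k v\<close>, which AM-GM bounds\<close>
  define g where "g y = v y * v y * y $ k" for y :: "real^'n"
  have g_int: "(pderiv_i k g has_integral 0) \<Omega>"
    unfolding g_def
    by (rule has_integral_pderiv_i_vanishing_on_frontier[OF bdd \<open>open \<Omega>\<close> negF
          C1_mult[OF C1_mult[OF Cv Cv] C1_component]]) (simp add: zero)
  have dg: "pderiv_i k g x = 2 * v x * pderiv_i k v x * x $ k + (v x)\<^sup>2" for x
  proof -
    have dv: "v differentiable (at x)" by (rule C1_differentiable[OF Cv])
    have "pderiv_i k g x = v x * v x * pderiv_i k (\<lambda>y. y $ k) x + pderiv_i k (\<lambda>y. v y * v y) x * x $ k"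
      unfolding g_def[abs_def]
      by (rule pderiv_i_mult[OF differentiable_mult[OF dv dv] C1_differentiable[OF C1_component]])
    also have "pderiv_i k (\<lambda>y. v y * v y) x = v x * pderiv_i k v x + pderiv_i k v x * v x"
      by (rule pderiv_i_mult[OF dv dv])
    finally show ?thesis by (simp add: pderiv_i_component power2_eq_square algebra_simps)
  qed
  have v_int: "(\<lambda>x. (v x)\<^sup>2) integrable_on \<Omega>"
    using C1_continuous_on[OF Cv]
    by (intro continuous_on_integrable_on_bounded bdd meas continuous_on_power)
  have grad_int: "(\<lambda>x. (norm (grad v x))\<^sup>2) integrable_on \<Omega>"
    using C1_continuous_on_pderiv_i[OF Cv] unfolding norm_grad_power2
    by (intro continuous_on_integrable_on_bounded bdd meas continuous_on_sum continuous_on_power)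
  have pointwise: "(v x)\<^sup>2 \<le> pderiv_i k g x + ((v x)\<^sup>2 / 2 + 2 * R\<^sup>2 * (norm (grad v x))\<^sup>2)"
    if "x \<in> \<Omega>" for x
  proof -
    have "\<bar>x $ k\<bar> \<le> R" using component_le_norm_cart[of x k] that R by auto
    then have "(x $ k)\<^sup>2 \<le> R\<^sup>2" by (metis abs_ge_zero power2_abs power_mono)
    moreover have "(pderiv_i k v x)\<^sup>2 \<le> (norm (grad v x))\<^sup>2"
      using component_le_norm_cart[of "grad v x" k] unfolding grad_component
      by (metis abs_ge_zero power2_abs power_mono)
    ultimately have "(x $ k)\<^sup>2 * (pderiv_i k v x)\<^sup>2 \<le> R\<^sup>2 * (norm (grad v x))\<^sup>2"
      by (intro mult_mono) auto
    moreover have "0 \<le> (v x / 2 + x $ k * pderiv_i k v x)\<^sup>2" by simp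
    ultimately show ?thesis unfolding dg by (simp add: power2_eq_square algebra_simps)
  qed
  have "integral \<Omega> (\<lambda>x. (v x)\<^sup>2)
      \<le> integral \<Omega> (\<lambda>x. pderiv_i k g x + ((v x)\<^sup>2 / 2 + 2 * R\<^sup>2 * (norm (grad v x))\<^sup>2))"
    using g_int v_int grad_int pointwise
    by (intro integral_le) (auto intro!: integrable_add integrable_on_mult_right)
  also have "\<dots> = integral \<Omega> (\<lambda>x. (v x)\<^sup>2) / 2 + 2 * R\<^sup>2 * integral \<Omega> (\<lambda>x. (norm (grad v x))\<^sup>2)"
    using g_int v_int grad_int
    by (simp add: integral_add integrable_add integrable_on_mult_right integral_unique
        has_integral_integrable)
  finally show ?thesis by simp
qed

lemma uniformly_positive_definite_on_compact:
  fixes \<gamma> :: "'a::topological_space \<Rightarrow> real^'n::finite^'n"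
  assumes "compact K" and cont: "\<And>i j. continuous_on K (\<lambda>x. \<gamma> x $ i $ j)"
    and pos: "\<And>x \<xi>. x \<in> K \<Longrightarrow> \<xi> \<noteq> 0 \<Longrightarrow> (\<gamma> x *v \<xi>) \<bullet> \<xi> > 0"
  obtains l where "l > 0" "\<And>x \<xi>. x \<in> K \<Longrightarrow> l * (norm \<xi>)\<^sup>2 \<le> (\<gamma> x *v \<xi>) \<bullet> \<xi>"
proof (cases "K = {}")
  case True
  then show ?thesis using that[of 1] by simp
next
  case False
  define Q where "Q p = (\<gamma> (fst p) *v snd p) \<bullet> snd p" for p
  let ?S = "K \<times> sphere (0::real^'n) 1"
  have "?S \<noteq> {}" using False by (auto intro: exI[of _ "axis undefined 1"])
  moreover have "continuous_on ?S Q"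
    unfolding Q_def inner_vec_def matrix_vector_mult_def
    by (intro continuous_intros continuous_on_compose2[OF cont continuous_on_fst]) auto
  ultimately obtain p0 where p0: "p0 \<in> ?S" "\<And>p. p \<in> ?S \<Longrightarrow> Q p0 \<le> Q p"
    using continuous_attains_inf[OF compact_Times[OF \<open>compact K\<close> compact_sphere]] by blast
  show ?thesis
  proof (rule that)
    show "Q p0 > 0" using p0(1) by (auto simp: Q_def intro!: pos)
    fix x and \<xi> :: "real^'n" assume x: "x \<in> K"
    show "Q p0 * (norm \<xi>)\<^sup>2 \<le> (\<gamma> x *v \<xi>) \<bullet> \<xi>"
    proof (cases "\<xi> = 0")
      case False
      have "Q p0 \<le> Q (x, \<xi> /\<^sub>R norm \<xi>)" using x False by (intro p0(2)) simp
      then have "Q p0 * (norm \<xi>)\<^sup>2 \<le> Q (x, \<xi> /\<^sub>R norm \<xi>) * (norm \<xi>)\<^sup>2"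
        by (simp add: mult_right_mono)
      also have "\<dots> = (\<gamma> x *v \<xi>) \<bullet> \<xi>"
        using False by (simp add: Q_def matrix_vector_mult_scaleR power2_eq_square field_simps)
      finally show ?thesis .
    qed simp
  qed
qed

lemma uniformly_elliptic_on_closure:
  assumes "bounded \<Omega>" "smooth_matrix \<gamma>" "\<forall>x\<in>closure \<Omega>. sym_pos_def (\<gamma> x)"
  obtains l where "l > 0" "\<forall>x\<in>closure \<Omega>. \<forall>\<xi>. l * (norm \<xi>)\<^sup>2 \<le> (\<gamma> x *v \<xi>) \<bullet> \<xi>"
proof -
  have cont: "continuous_on (closure \<Omega>) (\<lambda>x. \<gamma> x $ i $ j)" for i j
    using assms(2) unfolding smooth_matrix_def by (intro C1_continuous_on smooth_imp_C1) simp
  have pos: "(\<gamma> x *v \<xi>) \<bullet> \<xi> > 0" if "x \<in> closure \<Omega>" "\<xi> \<noteq> 0" for x \<xi>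
    using assms(3) that by (simp add: sym_pos_def_def)
  have "compact (closure \<Omega>)" using assms(1) by (simp add: compact_closure)
  then obtain l where "l > 0" "\<And>x \<xi>. x \<in> closure \<Omega> \<Longrightarrow> l * (norm \<xi>)\<^sup>2 \<le> (\<gamma> x *v \<xi>) \<bullet> \<xi>"
    using uniformly_positive_definite_on_compact[OF _ cont pos] by blast
  then show ?thesis by (intro that) auto
qed

section \<open>The energy identity for the remainder\<close>

lemma transport_sum_telescope:
  fixes s :: real and D T :: "nat \<Rightarrow> real"
  assumes "s > 0" and "T 0 = 0" and "\<forall>j<N. T (Suc j) = - D j"
  shows "(\<Sum>j\<le>N. (D j + s * T j) / s ^ j) = D N / s ^ N"
  using assms(3)
proof (induction N)
  case 0
  then show ?case using assms(2) by simp
next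
  case (Suc N)
  then have "(\<Sum>j\<le>N. (D j + s * T j) / s ^ j) = D N / s ^ N" "T (Suc N) = - D N" by simp_all
  then show ?case using assms(1) by (simp add: field_simps)
qed

lemma weighted_transport_identity:
  fixes \<gamma> :: "real^'n::finite \<Rightarrow> real^'n^'n" and \<phi> :: "real^'n \<Rightarrow> real"
    and aa :: "nat \<Rightarrow> real^'n \<Rightarrow> real"
  assumes \<gamma>: "smooth_matrix \<gamma>" and aa: "\<forall>j\<le>N. smooth_Rn (aa j)" and s: "s > 0"
    and T0: "2 * ((\<gamma> x *v grad \<phi> x) \<bullet> grad (aa 0) x) + divg (\<lambda>y. \<gamma> y *v grad \<phi> y) x * aa 0 x = 0"
    and T: "\<forall>j<N. 2 * ((\<gamma> x *v grad \<phi> x) \<bullet> grad (aa (Suc j)) x)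
                   + divg (\<lambda>y. \<gamma> y *v grad \<phi> y) x * aa (Suc j) x
                 = - divg (\<lambda>y. \<gamma> y *v grad (aa j) y) x"
  shows "divg (\<lambda>y. \<gamma> y *v grad (\<lambda>z. \<Sum>j\<le>N. aa j z / s ^ j) y) x
         + s * (2 * ((\<gamma> x *v grad \<phi> x) \<bullet> grad (\<lambda>z. \<Sum>j\<le>N. aa j z / s ^ j) x)
                + divg (\<lambda>y. \<gamma> y *v grad \<phi> y) x * (\<Sum>j\<le>N. aa j x / s ^ j))
       = divg (\<lambda>y. \<gamma> y *v grad (aa N) y) x / s ^ N"
proof -
  let ?p = "\<gamma> x *v grad \<phi> x" and ?L\<phi> = "divg (\<lambda>y. \<gamma> y *v grad \<phi> y) x"
  define D where "D j = divg (\<lambda>y. \<gamma> y *v grad (aa j) y) x" for j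
  define T where "T j = 2 * (?p \<bullet> grad (aa j) x) + ?L\<phi> * aa j x" for j
  have grad_sum_eq: "grad (\<lambda>z. \<Sum>j\<le>N. aa j z / s ^ j) y = (\<Sum>j\<le>N. grad (aa j) y /\<^sub>R s ^ j)" for y
    using aa by (intro grad_weighted_sum) (auto intro: smooth_imp_differentiable)
  have comp: "Ck 1 (\<lambda>y. (\<gamma> y *v grad (aa j) y) $ i)" if "j \<le> N" for i j
    using C1_matrix_grad_component[OF \<gamma>] aa that by blast
  have "divg (\<lambda>y. \<gamma> y *v grad (\<lambda>z. \<Sum>j\<le>N. aa j z / s ^ j) y) x
      = divg (\<lambda>y. \<Sum>j\<le>N. inverse (s ^ j) *\<^sub>R (\<gamma> y *v grad (aa j) y)) x"
    unfolding grad_sum_eq by (simp add: linear_sum[OF matrix_vector_mul_linear] matrix_vector_mult_scaleR)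
  also have "\<dots> = (\<Sum>j\<le>N. divg (\<lambda>y. inverse (s ^ j) *\<^sub>R (\<gamma> y *v grad (aa j) y)) x)"
    using C1_differentiable[OF comp] by (intro divg_sum) auto
  also have "\<dots> = (\<Sum>j\<le>N. D j / s ^ j)"
    using C1_differentiable[OF comp]
    by (intro sum.cong refl) (simp add: divg_cmult D_def divide_inverse_commute)
  finally have "divg (\<lambda>y. \<gamma> y *v grad (\<lambda>z. \<Sum>j\<le>N. aa j z / s ^ j) y) x
         + s * (2 * (?p \<bullet> grad (\<lambda>z. \<Sum>j\<le>N. aa j z / s ^ j) x) + ?L\<phi> * (\<Sum>j\<le>N. aa j x / s ^ j))
       = (\<Sum>j\<le>N. (D j + s * T j) / s ^ j)"
    unfolding grad_sum_eq
    by (simp add: inner_sum_right T_def sum.distrib sum_distrib_left add_divide_distrib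
        algebra_simps divide_inverse)
  also have "\<dots> = D N / s ^ N"
    using s T0 T by (intro transport_sum_telescope) (auto simp: D_def T_def)
  finally show ?thesis by (simp add: D_def)
qed

lemma inner_symmetric_matrix:
  fixes M :: "real^'n::finite^'n"
  assumes "transpose M = M"
  shows "(M *v u) \<bullet> v = (M *v v) \<bullet> u"
  by (metis assms dot_lmul_matrix inner_commute vector_transpose_matrix)

text \<open>The pointwise identity behind the energy identity: \<open>gv\<close>, \<open>gA\<close>, \<open>gw\<close>, \<open>p\<close> stand for
  \<open>\<nabla>v\<close>, \<open>\<nabla>A\<close>, \<open>\<nabla>w\<close>, \<open>\<nabla>\<phi>\<close>, \<open>LA\<close> and \<open>Lp\<close> for \<open>\<nabla>\<cdot>\<gamma>\<nabla>A\<close> and \<open>\<nabla>\<cdot>\<gamma>\<nabla>\<phi>\<close>, and \<open>e\<close> for \<open>e\<^sup>-\<^sup>s\<^sup>\<phi>\<close>.\<close>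

lemma conjugated_green_integrands:
  fixes M :: "real^'n::finite^'n" and p gv gA gw :: "real^'n"
  assumes sym: "transpose M = M" and e: "e > 0" and eik: "(M *v p) \<bullet> p = a"
    and w: "w = (v + A) / e" and gw: "gw = (gv + gA) /\<^sub>R e + (s * w) *\<^sub>R p"
  shows "((M *v gw) \<bullet> (e *\<^sub>R (gv - (s * v) *\<^sub>R p)) + e * v * (s\<^sup>2 * a * w))
         - ((M *v gA) \<bullet> gv + v * LA)
         - s * ((A *\<^sub>R (M *v p)) \<bullet> gv + v * (gA \<bullet> (M *v p) + A * Lp))
       = (M *v gv) \<bullet> gv - v * (LA + s * (2 * ((M *v p) \<bullet> gA) + Lp * A))"
proof -
  have "(M *v gv) \<bullet> p = (M *v p) \<bullet> gv" "(M *v gA) \<bullet> p = (M *v p) \<bullet> gA"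
    using inner_symmetric_matrix[OF sym] by auto
  then show ?thesis
    using e unfolding gw w
    by (simp add: algebra_simps matrix_vector_mult_scaleR eik inner_commute[of gA] power2_eq_square
        field_simps)
qed

lemma grad_exp_weighted:
  fixes \<phi> w A :: "real^'n::finite \<Rightarrow> real" and s :: real
  defines "e \<equiv> \<lambda>y. exp (- s * \<phi> y)"
  defines "v \<equiv> \<lambda>y. e y * w y - A y"
  assumes "\<phi> differentiable (at x)" "w differentiable (at x)" "A differentiable (at x)"
  shows "grad w x = (grad v x + grad A x) /\<^sub>R e x + (s * w x) *\<^sub>R grad \<phi> x"
    and "grad (\<lambda>y. e y * v y) x = e x *\<^sub>R (grad v x - (s * v x) *\<^sub>R grad \<phi> x)"
proof -
  have "exp differentiable (at (- s * \<phi> x))"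
    by (rule differentiableI[OF DERIV_exp[unfolded has_field_derivative_def]])
  then have de: "e differentiable (at x)"
    using differentiable_compose[of exp "\<lambda>y. - s * \<phi> y" x] assms(3) by (simp add: e_def o_def)
  have "grad e x = e x *\<^sub>R grad (\<lambda>y. - s * \<phi> y) x"
    unfolding e_def by (rule grad_exp) (simp add: assms(3))
  also have "grad (\<lambda>y. - s * \<phi> y) x = (- s) *\<^sub>R grad \<phi> x" by (rule grad_cmult[OF assms(3)])
  finally have grad_e: "grad e x = (- s * e x) *\<^sub>R grad \<phi> x" by simp
  have grad_v: "grad v x = e x *\<^sub>R (grad w x - (s * w x) *\<^sub>R grad \<phi> x) - grad A x"
    unfolding v_def using de assms(4,5)
    by (simp add: grad_diff grad_mult grad_e algebra_simps)
  have "e x > 0" by (simp add: e_def)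
  then show "grad w x = (grad v x + grad A x) /\<^sub>R e x + (s * w x) *\<^sub>R grad \<phi> x"
    by (simp add: grad_v)
  have "v differentiable (at x)" unfolding v_def using de assms(4,5) by simp
  then show "grad (\<lambda>y. e y * v y) x = e x *\<^sub>R (grad v x - (s * v x) *\<^sub>R grad \<phi> x)"
    using de by (simp add: grad_mult grad_e algebra_simps)
qed

lemma combined_green_integrands:
  fixes \<gamma> :: "real^'n::finite \<Rightarrow> real^'n^'n" and \<phi> w :: "real^'n \<Rightarrow> real"
    and aa :: "nat \<Rightarrow> real^'n \<Rightarrow> real"
  assumes e: "e = (\<lambda>y. exp (- s * \<phi> y))" and A: "A = (\<lambda>y. \<Sum>j\<le>N. aa j y / s ^ j)"
    and v: "v = (\<lambda>y. e y * w y - A y)"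
    and \<gamma>: "smooth_matrix \<gamma>" and \<phi>: "smooth_Rn \<phi>" and aa: "\<forall>j\<le>N. smooth_Rn (aa j)"
    and w: "smooth_Rn w" and s: "s > 0"
    and sym: "transpose (\<gamma> x) = \<gamma> x" and eik: "(\<gamma> x *v grad \<phi> x) \<bullet> grad \<phi> x = a x"
    and T0: "2 * ((\<gamma> x *v grad \<phi> x) \<bullet> grad (aa 0) x) + divg (\<lambda>y. \<gamma> y *v grad \<phi> y) x * aa 0 x = 0"
    and T: "\<forall>j<N. 2 * ((\<gamma> x *v grad \<phi> x) \<bullet> grad (aa (Suc j)) x)
                   + divg (\<lambda>y. \<gamma> y *v grad \<phi> y) x * aa (Suc j) x
                 = - divg (\<lambda>y. \<gamma> y *v grad (aa j) y) x"
    and pde: "divg (\<lambda>y. \<gamma> y *v grad w y) x = s\<^sup>2 * a x * w x"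
  shows "(\<gamma> x *v grad w x) \<bullet> grad (\<lambda>y. e y * v y) x + e x * v x * divg (\<lambda>y. \<gamma> y *v grad w y) x
      - ((\<gamma> x *v grad A x) \<bullet> grad v x + v x * divg (\<lambda>y. \<gamma> y *v grad A y) x)
      - s * ((A x *\<^sub>R (\<gamma> x *v grad \<phi> x)) \<bullet> grad v x
             + v x * divg (\<lambda>y. A y *\<^sub>R (\<gamma> y *v grad \<phi> y)) x)
    = (\<gamma> x *v grad v x) \<bullet> grad v x - v x * (divg (\<lambda>y. \<gamma> y *v grad (aa N) y) x / s ^ N)"
proof -
  have "Ck 1 (aa j)" if "j \<le> N" for j using aa that smooth_imp_C1 by blast
  then have CA: "Ck 1 A" unfolding A by (intro C1_sum C1_divide_const) auto
  have d: "\<phi> differentiable (at x)" "w differentiable (at x)" "A differentiable (at x)"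
    using smooth_imp_differentiable[OF \<phi>] smooth_imp_differentiable[OF w] C1_differentiable[OF CA]
    by blast+
  have grad_w: "grad w x = (grad v x + grad A x) /\<^sub>R e x + (s * w x) *\<^sub>R grad \<phi> x"
    unfolding v e by (rule grad_exp_weighted(1)[OF d])
  have grad_ev: "grad (\<lambda>y. e y * v y) x = e x *\<^sub>R (grad v x - (s * v x) *\<^sub>R grad \<phi> x)"
    unfolding v e by (rule grad_exp_weighted(2)[OF d])
  have divg_A\<phi>: "divg (\<lambda>y. A y *\<^sub>R (\<gamma> y *v grad \<phi> y)) x
      = grad A x \<bullet> (\<gamma> x *v grad \<phi> x) + A x * divg (\<lambda>y. \<gamma> y *v grad \<phi> y) x"
    using d(3) C1_differentiable[OF C1_matrix_grad_component[OF \<gamma> \<phi>]] by (rule divg_scaleR)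
  have "e x > 0" "w x = (v x + A x) / e x" by (simp_all add: e v)
  then have "(\<gamma> x *v grad w x) \<bullet> grad (\<lambda>y. e y * v y) x + e x * v x * divg (\<lambda>y. \<gamma> y *v grad w y) x
      - ((\<gamma> x *v grad A x) \<bullet> grad v x + v x * divg (\<lambda>y. \<gamma> y *v grad A y) x)
      - s * ((A x *\<^sub>R (\<gamma> x *v grad \<phi> x)) \<bullet> grad v x
             + v x * divg (\<lambda>y. A y *\<^sub>R (\<gamma> y *v grad \<phi> y)) x)
    = (\<gamma> x *v grad v x) \<bullet> grad v x - v x * (divg (\<lambda>y. \<gamma> y *v grad A y) x
        + s * (2 * ((\<gamma> x *v grad \<phi> x) \<bullet> grad A x) + divg (\<lambda>y. \<gamma> y *v grad \<phi> y) x * A x))"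
    unfolding grad_ev divg_A\<phi> pde using sym eik
    by (intro conjugated_green_integrands[OF _ _ _ _ grad_w]) auto
  also have "divg (\<lambda>y. \<gamma> y *v grad A y) x
      + s * (2 * ((\<gamma> x *v grad \<phi> x) \<bullet> grad A x) + divg (\<lambda>y. \<gamma> y *v grad \<phi> y) x * A x)
    = divg (\<lambda>y. \<gamma> y *v grad (aa N) y) x / s ^ N"
    unfolding A using T0 T by (rule weighted_transport_identity[OF \<gamma> aa s])
  finally show ?thesis .
qed

lemma remainder_energy_identity:
  fixes \<Omega> :: "(real^'n::finite) set" and a \<phi> w :: "real^'n \<Rightarrow> real"
    and \<gamma> :: "real^'n \<Rightarrow> real^'n^'n" and aa :: "nat \<Rightarrow> real^'n \<Rightarrow> real" and N :: nat and s :: real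
  defines "v \<equiv> \<lambda>x. exp (- s * \<phi> x) * w x - (\<Sum>j\<le>N. aa j x / s ^ j)"
  assumes bdd: "bounded \<Omega>" and op: "open \<Omega>" and negF: "negligible (frontier \<Omega>)"
    and \<gamma>: "smooth_matrix \<gamma>" and spd: "\<forall>x\<in>closure \<Omega>. sym_pos_def (\<gamma> x)"
    and \<phi>: "smooth_Rn \<phi>" and eik: "\<forall>x\<in>closure \<Omega>. (\<gamma> x *v grad \<phi> x) \<bullet> grad \<phi> x = a x"
    and aa: "\<forall>j\<le>N. smooth_Rn (aa j)"
    and T0: "\<forall>x\<in>closure \<Omega>. 2 * ((\<gamma> x *v grad \<phi> x) \<bullet> grad (aa 0) x)
                    + divg (\<lambda>y. \<gamma> y *v grad \<phi> y) x * aa 0 x = 0"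
    and T: "\<forall>j<N. \<forall>x\<in>closure \<Omega>. 2 * ((\<gamma> x *v grad \<phi> x) \<bullet> grad (aa (Suc j)) x)
                    + divg (\<lambda>y. \<gamma> y *v grad \<phi> y) x * aa (Suc j) x
                  = - divg (\<lambda>y. \<gamma> y *v grad (aa j) y) x"
    and s: "s > 0" and w: "smooth_Rn w"
    and pde: "\<forall>x\<in>\<Omega>. divg (\<lambda>y. \<gamma> y *v grad w y) x = s\<^sup>2 * a x * w x"
    and bc: "\<forall>x\<in>frontier \<Omega>. w x = exp (s * \<phi> x) * (\<Sum>j\<le>N. aa j x / s ^ j)"
  shows "Ck 1 v" and "\<forall>x\<in>frontier \<Omega>. v x = 0"
    and "((\<lambda>x. (\<gamma> x *v grad v x) \<bullet> grad v x - v x * (divg (\<lambda>y. \<gamma> y *v grad (aa N) y) x / s ^ N))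
           has_integral 0) \<Omega>"
proof -
  define e where "e = (\<lambda>y. exp (- s * \<phi> y))"
  define A where "A = (\<lambda>y. \<Sum>j\<le>N. aa j y / s ^ j)"
  have v_eq: "v = (\<lambda>y. e y * w y - A y)" by (simp add: v_def e_def A_def)
  have Ca: "Ck 1 (aa j)" if "j \<le> N" for j using aa that smooth_imp_C1 by blast
  have Ce: "Ck 1 e" unfolding e_def by (intro C1_exp C1_cmult smooth_imp_C1 \<phi>)
  have CA: "Ck 1 A" unfolding A_def by (intro C1_sum C1_divide_const Ca) auto
  show Cv: "Ck 1 v" unfolding v_eq by (intro C1_diff C1_mult Ce smooth_imp_C1 w CA)
  show zero: "\<forall>x\<in>frontier \<Omega>. v x = 0"
    using bc by (simp add: v_def exp_minus field_simps)
  \<comment> \<open>Green's identity for \<open>\<gamma>\<nabla>w\<close> against \<open>e v\<close> and for \<open>\<gamma>\<nabla>A\<close>, \<open>A \<gamma>\<nabla>\<phi>\<close> against \<open>v\<close>;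
    the eikonal and transport equations collapse their combination pointwise\<close>
  have matrix_grad_A: "\<gamma> y *v grad A y = (\<Sum>j\<le>N. (\<gamma> y *v grad (aa j) y) /\<^sub>R s ^ j)" for y
    unfolding A_def using aa
    by (subst grad_weighted_sum) (auto intro: smooth_imp_differentiable
        simp: linear_sum[OF matrix_vector_mul_linear] matrix_vector_mult_scaleR)
  have CF1: "Ck 1 (\<lambda>y. (\<gamma> y *v grad w y) $ i)" for i by (rule C1_matrix_grad_component[OF \<gamma> w])
  have CF2: "Ck 1 (\<lambda>y. (\<gamma> y *v grad A y) $ i)" for i
  proof -
    have summand: "Ck 1 (\<lambda>y. (\<gamma> y *v grad (aa j) y) $ i /\<^sub>R s ^ j)" if "j \<in> {..N}" for j
      unfolding real_scaleR_def using aa that by (intro C1_cmult C1_matrix_grad_component[OF \<gamma>]) auto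
    show ?thesis
      unfolding matrix_grad_A sum_component vector_scaleR_component
      by (rule C1_sum) (simp_all only: finite_atMost summand)
  qed
  have CF3: "Ck 1 (\<lambda>y. (A y *\<^sub>R (\<gamma> y *v grad \<phi> y)) $ i)" for i
    unfolding vector_scaleR_component real_scaleR_def
    by (intro C1_mult CA C1_matrix_grad_component[OF \<gamma> \<phi>])
  note green = green_identity_vanishing_on_frontier[OF bdd op negF]
  have "((\<lambda>x. ((\<gamma> x *v grad w x) \<bullet> grad (\<lambda>y. e y * v y) x + e x * v x * divg (\<lambda>y. \<gamma> y *v grad w y) x)
        - ((\<gamma> x *v grad A x) \<bullet> grad v x + v x * divg (\<lambda>y. \<gamma> y *v grad A y) x)
        - s * ((A x *\<^sub>R (\<gamma> x *v grad \<phi> x)) \<bullet> grad v x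
               + v x * divg (\<lambda>y. A y *\<^sub>R (\<gamma> y *v grad \<phi> y)) x)) has_integral 0) \<Omega>"
    using has_integral_diff[OF has_integral_diff[OF green[OF C1_mult[OF Ce Cv] _ CF1] green[OF Cv zero CF2]]
        has_integral_mult_right[OF green[OF Cv zero CF3], of s]]
    using zero by (simp add: mult.assoc)
  then show "((\<lambda>x. (\<gamma> x *v grad v x) \<bullet> grad v x - v x * (divg (\<lambda>y. \<gamma> y *v grad (aa N) y) x / s ^ N))
           has_integral 0) \<Omega>"
    by (rule has_integral_eq[rotated])
      (rule combined_green_integrands[OF e_def A_def v_eq \<gamma> \<phi> aa w s],
       use spd eik T0 T pde in \<open>auto simp: sym_pos_def_def dest: subsetD[OF closure_subset]\<close>)
qed

lemma energy_bound_from_source: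
  fixes G E v f :: "'a::euclidean_space \<Rightarrow> real"
  assumes l: "l > 0" and P: "P > 0"
    and int: "G integrable_on \<Omega>" "E integrable_on \<Omega>" "(\<lambda>x. (v x)\<^sup>2) integrable_on \<Omega>"
      "(\<lambda>x. (f x)\<^sup>2) integrable_on \<Omega>" "(\<lambda>x. v x * f x) integrable_on \<Omega>"
    and ell: "\<And>x. x \<in> \<Omega> \<Longrightarrow> l * G x \<le> E x"
    and poincare: "integral \<Omega> (\<lambda>x. (v x)\<^sup>2) \<le> P * integral \<Omega> G"
    and identity: "integral \<Omega> E = integral \<Omega> (\<lambda>x. v x * f x)"
  shows "integral \<Omega> G \<le> P / l\<^sup>2 * integral \<Omega> (\<lambda>x. (f x)\<^sup>2)"
proof -
  define c where "c = l / (2 * P)"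
  have c: "c > 0" using l P by (simp add: c_def)
  have young: "v x * f x \<le> c * (v x)\<^sup>2 + (f x)\<^sup>2 / (4 * c)" for x
  proof -
    have "0 \<le> (2 * c * v x - f x)\<^sup>2 / (4 * c)" using c by simp
    then show ?thesis using c by (simp add: power2_eq_square field_simps)
  qed
  have "l * integral \<Omega> G \<le> integral \<Omega> E"
    using int ell by (subst integral_mult_right[symmetric]) (intro integral_le integrable_on_mult_right)
  also have "\<dots> \<le> integral \<Omega> (\<lambda>x. c * (v x)\<^sup>2 + (f x)\<^sup>2 / (4 * c))"
    unfolding identity using int young by (intro integral_le integrable_add integrable_on_mult_right
        integrable_on_divide) auto
  also have "\<dots> = c * integral \<Omega> (\<lambda>x. (v x)\<^sup>2) + integral \<Omega> (\<lambda>x. (f x)\<^sup>2) / (4 * c)"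
    using int by (simp add: integral_add integrable_on_mult_right integrable_on_divide)
  also have "\<dots> \<le> c * (P * integral \<Omega> G) + integral \<Omega> (\<lambda>x. (f x)\<^sup>2) / (4 * c)"
    using poincare c by simp
  finally have "l / 2 * integral \<Omega> G \<le> P / (2 * l) * integral \<Omega> (\<lambda>x. (f x)\<^sup>2)"
    using l P by (simp add: c_def field_simps)
  then show ?thesis using l by (simp add: field_simps power2_eq_square)
qed

lemma gradient_energy_bound:
  fixes \<Omega> :: "(real^'n::finite) set" and \<gamma> :: "real^'n \<Rightarrow> real^'n^'n" and v f :: "real^'n \<Rightarrow> real"
  assumes bdd: "bounded \<Omega>" and meas: "\<Omega> \<in> sets lebesgue" and \<gamma>: "smooth_matrix \<gamma>"
    and l: "l > 0" and ell: "\<forall>x\<in>\<Omega>. \<forall>\<xi>. l * (norm \<xi>)\<^sup>2 \<le> (\<gamma> x *v \<xi>) \<bullet> \<xi>"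
    and P: "P > 0" and poincare: "integral \<Omega> (\<lambda>x. (v x)\<^sup>2) \<le> P * integral \<Omega> (\<lambda>x. (norm (grad v x))\<^sup>2)"
    and Cv: "Ck 1 v" and f: "continuous_on UNIV f"
    and identity: "((\<lambda>x. (\<gamma> x *v grad v x) \<bullet> grad v x - v x * f x) has_integral 0) \<Omega>"
  shows "integral \<Omega> (\<lambda>x. (norm (grad v x))\<^sup>2) \<le> P / l\<^sup>2 * integral \<Omega> (\<lambda>x. (f x)\<^sup>2)"
proof (rule energy_bound_from_source[OF l P _ _ _ _ _ _ poincare])
  have int: "g integrable_on \<Omega>" if "continuous_on UNIV g" for g :: "real^'n \<Rightarrow> real"
    using that bdd meas by (rule continuous_on_integrable_on_bounded)
  have cont_v: "continuous_on UNIV v" by (rule C1_continuous_on[OF Cv])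
  show energy_int: "(\<lambda>x. (\<gamma> x *v grad v x) \<bullet> grad v x) integrable_on \<Omega>"
    by (rule int[OF continuous_on_matrix_energy[OF \<gamma> Cv]])
  show source_int: "(\<lambda>x. v x * f x) integrable_on \<Omega>"
    using cont_v f by (intro int continuous_intros)
  show "(\<lambda>x. (norm (grad v x))\<^sup>2) integrable_on \<Omega>" "(\<lambda>x. (v x)\<^sup>2) integrable_on \<Omega>"
    "(\<lambda>x. (f x)\<^sup>2) integrable_on \<Omega>"
    using cont_v f by (auto intro!: int continuous_intros continuous_on_norm_grad_power2 Cv)
  show "l * (norm (grad v x))\<^sup>2 \<le> (\<gamma> x *v grad v x) \<bullet> grad v x" if "x \<in> \<Omega>" for x
    using ell that by blast
  show "integral \<Omega> (\<lambda>x. (\<gamma> x *v grad v x) \<bullet> grad v x) = integral \<Omega> (\<lambda>x. v x * f x)"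
    using integral_unique[OF identity] integral_diff[OF energy_int source_int] by simp
qed

lemma H1_norm_power2:
  assumes "Ck 1 f" "bounded \<Omega>" "\<Omega> \<in> sets lebesgue"
  shows "(H1_norm \<Omega> f)\<^sup>2 = integral \<Omega> (\<lambda>x. (f x)\<^sup>2 + (norm (grad f x))\<^sup>2)"
proof -
  have "(\<lambda>x. (f x)\<^sup>2 + (norm (grad f x))\<^sup>2) integrable_on \<Omega>"
    using assms by (intro continuous_on_integrable_on_bounded continuous_intros C1_continuous_on
        continuous_on_norm_grad_power2)
  then show ?thesis by (simp add: H1_norm_def integral_nonneg)
qed

lemma H1_norm_add_power2_le:
  assumes f: "Ck 1 f" and g: "Ck 1 g" and "bounded \<Omega>" "\<Omega> \<in> sets lebesgue"
  shows "(H1_norm \<Omega> (\<lambda>x. f x + g x))\<^sup>2 \<le> 2 * (H1_norm \<Omega> f)\<^sup>2 + 2 * (H1_norm \<Omega> g)\<^sup>2"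
proof -
  have int: "(\<lambda>x. (h x)\<^sup>2 + (norm (grad h x))\<^sup>2) integrable_on \<Omega>" if "Ck 1 h" for h
    using that assms(3,4) by (intro continuous_on_integrable_on_bounded continuous_intros
        C1_continuous_on continuous_on_norm_grad_power2)
  have sq: "(norm (p + q))\<^sup>2 \<le> 2 * (norm p)\<^sup>2 + 2 * (norm q)\<^sup>2" for p q :: "'b::real_normed_vector"
  proof -
    have "(norm (p + q))\<^sup>2 \<le> (norm p + norm q)\<^sup>2" by (simp add: norm_triangle_ineq power_mono)
    also have "\<dots> \<le> 2 * (norm p)\<^sup>2 + 2 * (norm q)\<^sup>2"
      using zero_le_power2[of "norm p - norm q"] by (simp add: power2_eq_square algebra_simps)
    finally show ?thesis .
  qed
  let ?I = "\<lambda>h x. (h x)\<^sup>2 + (norm (grad h x))\<^sup>2"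
  have "?I (\<lambda>x. f x + g x) x \<le> 2 * ?I f x + 2 * ?I g x" for x
    using sq[of "f x" "g x"] sq[of "grad f x" "grad g x"]
    by (simp add: grad_add C1_differentiable[OF f] C1_differentiable[OF g])
  then have "integral \<Omega> (?I (\<lambda>x. f x + g x)) \<le> integral \<Omega> (\<lambda>x. 2 * ?I f x + 2 * ?I g x)"
    by (intro integral_le int C1_add f g integrable_add integrable_on_mult_right)
  also have "\<dots> = 2 * integral \<Omega> (?I f) + 2 * integral \<Omega> (?I g)"
    by (simp only: integral_add[OF integrable_on_mult_right integrable_on_mult_right, OF int int, OF f g]
        integral_mult_right)
  finally show ?thesis using assms by (simp only: H1_norm_power2 C1_add)
qed

lemma H1_norm_cmult:
  assumes "Ck 1 f"
  shows "H1_norm \<Omega> (\<lambda>x. c * f x) = \<bar>c\<bar> * H1_norm \<Omega> f"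
proof -
  have "(c * f x)\<^sup>2 + (norm (grad (\<lambda>x. c * f x) x))\<^sup>2 = c\<^sup>2 * ((f x)\<^sup>2 + (norm (grad f x))\<^sup>2)" for x
    using C1_differentiable[OF assms]
    by (simp add: grad_cmult power_mult_distrib distrib_left)
  then show ?thesis by (simp add: H1_norm_def real_sqrt_mult)
qed

lemma H1_estimate_from_energy_identity:
  fixes \<Omega> :: "(real^'n::finite) set" and \<gamma> :: "real^'n \<Rightarrow> real^'n^'n" and v b D :: "real^'n \<Rightarrow> real"
  assumes bdd: "bounded \<Omega>" and meas: "\<Omega> \<in> sets lebesgue" and \<gamma>: "smooth_matrix \<gamma>"
    and l: "l > 0" and ell: "\<forall>x\<in>\<Omega>. \<forall>\<xi>. l * (norm \<xi>)\<^sup>2 \<le> (\<gamma> x *v \<xi>) \<bullet> \<xi>"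
    and P: "P > 0" and poincare: "integral \<Omega> (\<lambda>x. (v x)\<^sup>2) \<le> P * integral \<Omega> (\<lambda>x. (norm (grad v x))\<^sup>2)"
    and Cv: "Ck 1 v" and Cb: "Ck 1 b" and D: "continuous_on UNIV D" and \<epsilon>: "\<epsilon> > 0"
    and identity: "((\<lambda>x. (\<gamma> x *v grad v x) \<bullet> grad v x - v x * (\<epsilon> * D x)) has_integral 0) \<Omega>"
  shows "H1_norm \<Omega> (\<lambda>x. v x + \<epsilon> * b x)
    \<le> \<epsilon> * sqrt (2 * (P + 1) * (P / l\<^sup>2 * integral \<Omega> (\<lambda>x. (D x)\<^sup>2)) + 2 * (H1_norm \<Omega> b)\<^sup>2)"
proof -
  let ?G = "integral \<Omega> (\<lambda>x. (norm (grad v x))\<^sup>2)"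
  define Q where "Q = (P + 1) * (P / l\<^sup>2 * integral \<Omega> (\<lambda>x. (D x)\<^sup>2))"
  have "?G \<le> P / l\<^sup>2 * integral \<Omega> (\<lambda>x. (\<epsilon> * D x)\<^sup>2)"
    using D by (intro gradient_energy_bound[OF bdd meas \<gamma> l ell P poincare Cv _ identity]
        continuous_intros)
  then have G: "?G \<le> \<epsilon>\<^sup>2 * (P / l\<^sup>2 * integral \<Omega> (\<lambda>x. (D x)\<^sup>2))"
    by (simp add: power_mult_distrib mult_ac)
  have "(H1_norm \<Omega> v)\<^sup>2 = integral \<Omega> (\<lambda>x. (v x)\<^sup>2) + ?G"
    using C1_continuous_on[OF Cv] bdd meas
    by (simp add: H1_norm_power2[OF Cv bdd meas] integral_add continuous_on_integrable_on_bounded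
        continuous_intros continuous_on_norm_grad_power2[OF Cv])
  also have "\<dots> \<le> (P + 1) * ?G" using poincare by (simp add: algebra_simps)
  finally have v_bound: "(H1_norm \<Omega> v)\<^sup>2 \<le> \<epsilon>\<^sup>2 * Q"
    unfolding Q_def using G P by (smt (verit) mult.left_commute mult_left_mono)
  have "(H1_norm \<Omega> (\<lambda>x. v x + \<epsilon> * b x))\<^sup>2
      \<le> 2 * (H1_norm \<Omega> v)\<^sup>2 + 2 * (H1_norm \<Omega> (\<lambda>x. \<epsilon> * b x))\<^sup>2"
    by (rule H1_norm_add_power2_le[OF Cv C1_cmult[OF Cb] bdd meas])
  also have "\<dots> \<le> 2 * (\<epsilon>\<^sup>2 * Q) + 2 * (\<epsilon>\<^sup>2 * (H1_norm \<Omega> b)\<^sup>2)"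
    using v_bound by (simp add: H1_norm_cmult[OF Cb] power_mult_distrib)
  also have "\<dots> = \<epsilon>\<^sup>2 * (2 * (P + 1) * (P / l\<^sup>2 * integral \<Omega> (\<lambda>x. (D x)\<^sup>2)) + 2 * (H1_norm \<Omega> b)\<^sup>2)"
    by (simp add: Q_def algebra_simps)
  finally show ?thesis
    using \<epsilon> by (auto dest!: real_le_rsqrt simp: real_sqrt_mult)
qed

lemma remainder_H1_bound:
  fixes \<Omega> :: "(real^'n::finite) set" and a \<phi> w :: "real^'n \<Rightarrow> real"
    and \<gamma> :: "real^'n \<Rightarrow> real^'n^'n" and aa :: "nat \<Rightarrow> real^'n \<Rightarrow> real" and N :: nat and \<tau> :: real
  assumes op: "open \<Omega>" and negF: "negligible (frontier \<Omega>)" and R: "R > 0" "\<Omega> \<subseteq> ball 0 R"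
    and \<gamma>: "smooth_matrix \<gamma>" and spd: "\<forall>x\<in>closure \<Omega>. sym_pos_def (\<gamma> x)"
    and l: "l > 0" and ell: "\<forall>x\<in>closure \<Omega>. \<forall>\<xi>. l * (norm \<xi>)\<^sup>2 \<le> (\<gamma> x *v \<xi>) \<bullet> \<xi>"
    and \<phi>: "smooth_Rn \<phi>" and eik: "\<forall>x\<in>closure \<Omega>. (\<gamma> x *v grad \<phi> x) \<bullet> grad \<phi> x = a x"
    and aa: "\<forall>j\<le>N. smooth_Rn (aa j)"
    and T0: "\<forall>x\<in>closure \<Omega>. 2 * ((\<gamma> x *v grad \<phi> x) \<bullet> grad (aa 0) x)
                    + divg (\<lambda>y. \<gamma> y *v grad \<phi> y) x * aa 0 x = 0"
    and T: "\<forall>j<N. \<forall>x\<in>closure \<Omega>. 2 * ((\<gamma> x *v grad \<phi> x) \<bullet> grad (aa (Suc j)) x)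
                    + divg (\<lambda>y. \<gamma> y *v grad \<phi> y) x * aa (Suc j) x
                  = - divg (\<lambda>y. \<gamma> y *v grad (aa j) y) x"
    and \<tau>: "\<tau> > 0" and w: "smooth_Rn w"
    and pde: "\<forall>x\<in>\<Omega>. divg (\<lambda>y. \<gamma> y *v grad w y) x - \<tau> * a x * w x = 0"
    and bc: "\<forall>x\<in>frontier \<Omega>. w x = exp (sqrt \<tau> * \<phi> x) * (\<Sum>j\<le>N. aa j x / sqrt \<tau> ^ j)"
  shows "H1_norm \<Omega> (\<lambda>x. exp (- sqrt \<tau> * \<phi> x) * w x - (\<Sum>j<N. aa j x / sqrt \<tau> ^ j))
    \<le> sqrt (2 * (4 * R\<^sup>2 + 1) * (4 * R\<^sup>2 / l\<^sup>2 * integral \<Omega> (\<lambda>x. (divg (\<lambda>y. \<gamma> y *v grad (aa N) y) x)\<^sup>2))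
             + 2 * (H1_norm \<Omega> (aa N))\<^sup>2) / sqrt \<tau> ^ N"
proof -
  have bdd: "bounded \<Omega>" using R(2) bounded_subset by blast
  define s where "s = sqrt \<tau>"
  have s: "s > 0" and \<tau>_eq: "\<tau> = s\<^sup>2" using \<tau> by (simp_all add: s_def)
  define v where "v x = exp (- s * \<phi> x) * w x - (\<Sum>j\<le>N. aa j x / s ^ j)" for x
  have "\<forall>x\<in>\<Omega>. divg (\<lambda>y. \<gamma> y *v grad w y) x = s\<^sup>2 * a x * w x" using pde by (simp add: \<tau>_eq)
  note energy = remainder_energy_identity[OF bdd op negF \<gamma> spd \<phi> eik aa T0 T s w this bc[folded s_def]]
  have Cv: "Ck 1 v" and zero: "\<forall>x\<in>frontier \<Omega>. v x = 0"
    and identity: "((\<lambda>x. (\<gamma> x *v grad v x) \<bullet> grad v x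
        - v x * (1 / s ^ N * divg (\<lambda>y. \<gamma> y *v grad (aa N) y) x)) has_integral 0) \<Omega>"
    using energy by (simp_all add: v_def[abs_def])
  have "(\<lambda>x. exp (- s * \<phi> x) * w x - (\<Sum>j<N. aa j x / s ^ j)) = (\<lambda>x. v x + 1 / s ^ N * aa N x)"
    by (simp add: v_def fun_eq_iff lessThan_Suc_atMost[symmetric])
  moreover have "H1_norm \<Omega> (\<lambda>x. v x + 1 / s ^ N * aa N x)
    \<le> 1 / s ^ N * sqrt (2 * (4 * R\<^sup>2 + 1) * (4 * R\<^sup>2 / l\<^sup>2
          * integral \<Omega> (\<lambda>x. (divg (\<lambda>y. \<gamma> y *v grad (aa N) y) x)\<^sup>2)) + 2 * (H1_norm \<Omega> (aa N))\<^sup>2)"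
  proof (rule H1_estimate_from_energy_identity[OF bdd _ \<gamma> l _ _ _ Cv _ _ _ identity])
    show "\<Omega> \<in> sets lebesgue" using lmeasurable_open[OF bdd op] by (simp add: fmeasurableD)
    show "integral \<Omega> (\<lambda>x. (v x)\<^sup>2) \<le> 4 * R\<^sup>2 * integral \<Omega> (\<lambda>x. (norm (grad v x))\<^sup>2)"
      by (rule poincare_inequality[OF op R(2) negF Cv zero])
    show "Ck 1 (aa N)" using aa smooth_imp_C1 by blast
    show "continuous_on UNIV (divg (\<lambda>y. \<gamma> y *v grad (aa N) y))"
      using aa by (intro continuous_on_divg_matrix_grad \<gamma>) simp
  qed (use ell closure_subset l R(1) s in auto)
  ultimately show ?thesis by (simp add: s_def)
qed

theorem theorem3p3:
  fixes \<Omega> :: "(real^'n::finite) set"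
    and a \<phi> :: "real^'n \<Rightarrow> real"
    and \<gamma> :: "real^'n \<Rightarrow> real^'n^'n"
    and aa :: "nat \<Rightarrow> real^'n \<Rightarrow> real"
    and N :: nat
  assumes dom: "smooth_bounded_domain \<Omega>"
    and a_smooth: "smooth_Rn a"
    and a_pos: "\<forall>x\<in>closure \<Omega>. a x > 0"
    and \<gamma>_smooth: "smooth_matrix \<gamma>"
    and \<gamma>_spd: "\<forall>x\<in>closure \<Omega>. sym_pos_def (\<gamma> x)"
    and \<phi>_smooth: "smooth_Rn \<phi>"
    and eikonal: "\<forall>x\<in>closure \<Omega>. (\<gamma> x *v grad \<phi> x) \<bullet> grad \<phi> x = a x"
    and N_ge: "N \<ge> 1"
    and aa_smooth: "\<forall>j\<le>N. smooth_Rn (aa j)"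
    and transport0: "\<forall>x\<in>closure \<Omega>.
          2 * ((\<gamma> x *v grad \<phi> x) \<bullet> grad (aa 0) x)
          + divg (\<lambda>y. \<gamma> y *v grad \<phi> y) x * aa 0 x = 0"
    and transport: "\<forall>j<N. \<forall>x\<in>closure \<Omega>.
          2 * ((\<gamma> x *v grad \<phi> x) \<bullet> grad (aa (Suc j)) x)
          + divg (\<lambda>y. \<gamma> y *v grad \<phi> y) x * aa (Suc j) x
          = - divg (\<lambda>y. \<gamma> y *v grad (aa j) y) x"
  shows "\<exists>C T. \<forall>\<tau>::real. \<forall>w :: real^'n \<Rightarrow> real.
           \<tau> > 0 \<and> \<tau> \<ge> T \<and> smooth_Rn w
           \<and> (\<forall>x\<in>\<Omega>. divg (\<lambda>y. \<gamma> y *v grad w y) x - \<tau> * a x * w x = 0)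
           \<and> (\<forall>x\<in>frontier \<Omega>. w x = exp (sqrt \<tau> * \<phi> x) * (\<Sum>j\<le>N. aa j x / sqrt \<tau> ^ j))
           \<longrightarrow> H1_norm \<Omega> (\<lambda>x. exp (- sqrt \<tau> * \<phi> x) * w x - (\<Sum>j<N. aa j x / sqrt \<tau> ^ j))
               \<le> C / sqrt \<tau> ^ N"
proof -
  from dom have bdd: "bounded \<Omega>" and op: "open \<Omega>" unfolding smooth_bounded_domain_def by auto
  obtain R where R: "R > 0" "\<Omega> \<subseteq> ball 0 R" using bounded_subset_ballD[OF bdd] by blast
  obtain l where "l > 0" "\<forall>x\<in>closure \<Omega>. \<forall>\<xi>. l * (norm \<xi>)\<^sup>2 \<le> (\<gamma> x *v \<xi>) \<bullet> \<xi>"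
    using uniformly_elliptic_on_closure[OF bdd \<gamma>_smooth \<gamma>_spd] by blast
  from remainder_H1_bound[OF op negligible_frontier_smooth_domain[OF dom] R \<gamma>_smooth \<gamma>_spd
      this \<phi>_smooth eikonal aa_smooth transport0 transport]
  show ?thesis by blast
qed

end
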